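(* Let $G=(V,E)$ be a connected, locally finite, undirected graph and $s:V\to\mathbb{R}$ with odometer $u_\infty$. The following are equivalent: (1) there exists a legal stabilizing toppling procedure for $s$; (2) there exists a stabilizing toppling procedure for $s$; (3) $\mathcal{F}_s\neq\emptyset$; (4) $u_\infty(x)<\infty$ for all $x\in V$; (5) every legal toppling procedure for $s$ is finite; (6) the parallel toppling procedure for $s$ is finite.
   Context: $\Delta u(x)=\sum_{y\sim x}(u(y)-u(x))$; $\mathcal{F}_s=\{f:V\to\mathbb{R}: f\ge0,\ s+\Delta f\le1\}$; odometer $u_\infty(x)=\inf\{f(x):f\in\mathcal{F}_s\}$ ($\inf\emptyset=\infty$). A toppling procedure: a well-ordered closed set $T\subset[0,\infty)$ with $0\in T$ and $(t,x)\mapsto u_t(x)\in[0,\infty)$ with $u_0=0$, $u_t(x)$ nondecreasing in $t$, and $t_n\uparrow t\Rightarrow u_{t_n}(x)\uparrow u_t(x)$. With $s_t=s+\Delta u_t$, $t^-=\sup\{r\in T:r<t\}$: legal for $s$ if $u_t(x)-u_{t^-}(x)\le (s_{t^-}(x)-1)^+/\deg(x)$ for all $x$, $t\in T\setminus\{0\}$; finite if $u_\infty(x)=\lim_{t\to\sup T}u_t(x)<\infty$ for all $x$; stabilizing if finite and $s+\Delta u_\infty\le1$. The parallel toppling procedure has $T=\mathbb{N}$ and $u_t(x)-u_{t-1}(x)=(s_{t-1}(x)-1)^+/\deg(x)$ for all $x$, $t\ge1$. *)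

theory Defs
  imports "HOL-Analysis.Analysis"
begin

text \<open>Graph: vertex set = the type 'a, adjacency relation E (symmetric, irreflexive).\<close>

definition nbrs :: "('a \<Rightarrow> 'a \<Rightarrow> bool) \<Rightarrow> 'a \<Rightarrow> 'a set" where
  "nbrs E x = {y. E x y}"

definition deg :: "('a \<Rightarrow> 'a \<Rightarrow> bool) \<Rightarrow> 'a \<Rightarrow> real" where
  "deg E x = real (card (nbrs E x))"

definition Lap :: "('a \<Rightarrow> 'a \<Rightarrow> bool) \<Rightarrow> ('a \<Rightarrow> real) \<Rightarrow> 'a \<Rightarrow> real" where
  "Lap E u x = (\<Sum>y\<in>nbrs E x. u y - u x)"

definition Fs :: "('a \<Rightarrow> 'a \<Rightarrow> bool) \<Rightarrow> ('a \<Rightarrow> real) \<Rightarrow> ('a \<Rightarrow> real) set" where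
  "Fs E s = {f. (\<forall>x. f x \<ge> 0) \<and> (\<forall>x. s x + Lap E f x \<le> 1)}"

text \<open>Odometer, with values in the extended reals (Inf of the empty set is \<infinity>).\<close>
definition odometer :: "('a \<Rightarrow> 'a \<Rightarrow> bool) \<Rightarrow> ('a \<Rightarrow> real) \<Rightarrow> 'a \<Rightarrow> ereal" where
  "odometer E s x = (INF f\<in>Fs E s. ereal (f x))"

definition well_ordered_set :: "real set \<Rightarrow> bool" where
  "well_ordered_set T \<longleftrightarrow> (\<forall>S. S \<subseteq> T \<and> S \<noteq> {} \<longrightarrow> (\<exists>m\<in>S. \<forall>y\<in>S. m \<le> y))"

definition toppling_proc :: "real set \<Rightarrow> (real \<Rightarrow> 'a \<Rightarrow> real) \<Rightarrow> bool" where
  "toppling_proc T u \<longleftrightarrow>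
     T \<subseteq> {0..} \<and> closed T \<and> 0 \<in> T \<and> well_ordered_set T \<and>
     (\<forall>x. u 0 x = 0) \<and>
     (\<forall>t\<in>T. \<forall>x. u t x \<ge> 0) \<and>
     (\<forall>x. \<forall>t\<in>T. \<forall>t'\<in>T. t \<le> t' \<longrightarrow> u t x \<le> u t' x) \<and>
     (\<forall>x t tn. t \<in> T \<longrightarrow> range tn \<subseteq> T \<longrightarrow> incseq tn \<longrightarrow> tn \<longlonglongrightarrow> t
        \<longrightarrow> (\<lambda>n. u (tn n) x) \<longlonglongrightarrow> u t x)"

definition tminus :: "real set \<Rightarrow> real \<Rightarrow> real" where
  "tminus T t = Sup {r\<in>T. r < t}"

definition legal :: "('a \<Rightarrow> 'a \<Rightarrow> bool) \<Rightarrow> ('a \<Rightarrow> real) \<Rightarrow> real set \<Rightarrow> (real \<Rightarrow> 'a \<Rightarrow> real) \<Rightarrow> bool" where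
  "legal E s T u \<longleftrightarrow>
     (\<forall>t\<in>T - {0}. \<forall>x. u t x - u (tminus T t) x
        \<le> max 0 (s x + Lap E (u (tminus T t)) x - 1) / deg E x)"

text \<open>Finite: the (monotone) limit u_\<infinity>(x) = lim_{t \<rightarrow> sup T} u_t(x) = sup_{t\<in>T} u_t(x) is finite.\<close>
definition finite_proc :: "real set \<Rightarrow> (real \<Rightarrow> 'a \<Rightarrow> real) \<Rightarrow> bool" where
  "finite_proc T u \<longleftrightarrow> (\<forall>x. bdd_above ((\<lambda>t. u t x) ` T))"

definition u_lim :: "real set \<Rightarrow> (real \<Rightarrow> 'a \<Rightarrow> real) \<Rightarrow> 'a \<Rightarrow> real" where
  "u_lim T u x = (SUP t\<in>T. u t x)"

definition stabilizing :: "('a \<Rightarrow> 'a \<Rightarrow> bool) \<Rightarrow> ('a \<Rightarrow> real) \<Rightarrow> real set \<Rightarrow> (real \<Rightarrow> 'a \<Rightarrow> real) \<Rightarrow> bool" where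
  "stabilizing E s T u \<longleftrightarrow> finite_proc T u \<and> (\<forall>x. s x + Lap E (u_lim T u) x \<le> 1)"

primrec par_top :: "('a \<Rightarrow> 'a \<Rightarrow> bool) \<Rightarrow> ('a \<Rightarrow> real) \<Rightarrow> nat \<Rightarrow> 'a \<Rightarrow> real" where
  "par_top E s 0 x = 0"
| "par_top E s (Suc n) x = par_top E s n x + max 0 (s x + Lap E (par_top E s n) x - 1) / deg E x"

definition parallel_proc :: "('a \<Rightarrow> 'a \<Rightarrow> bool) \<Rightarrow> ('a \<Rightarrow> real) \<Rightarrow> real \<Rightarrow> 'a \<Rightarrow> real" where
  "parallel_proc E s t x = par_top E s (nat \<lfloor>t\<rfloor>) x"

end

theory Submission
  imports Defs
begin

text \<open>
  The heart of the matter is the least action principle: a legal toppling procedure never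
  exceeds any \<open>f \<in> \<F>\<^sub>s\<close>. Along the well-ordered time set this is a transfinite induction:
  at a successor time one legal step from below \<open>f\<close> stays below \<open>f\<close>, because \<open>s + \<Delta>f \<le> 1\<close>
  bounds exactly the amount that may legally be toppled; at a limit time it follows from
  left-continuity. Hence (3) gives (5) and (4); (5) gives (6) because the parallel procedure
  is legal; and the limit of a finite parallel procedure is stable, so it witnesses (1).
  The limit of any stabilizing procedure lies in \<open>\<F>\<^sub>s\<close>, closing the cycle.
\<close>

lemma deg_pos:
  assumes locfin: "\<And>x. finite (nbrs E x)"
    and conn: "\<And>x y. E\<^sup>*\<^sup>* x y"
    and edge: "\<exists>x y. E x y"
  shows "deg E x > 0"
proof -
  obtain a b where "E a b" using edge by blast
  moreover have "\<exists>y. E x y" if "x \<noteq> a"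
    using conn[of x a] that by (auto elim: converse_rtranclpE)
  ultimately have "nbrs E x \<noteq> {}" by (auto simp: nbrs_def)
  thus ?thesis using locfin[of x] by (simp add: deg_def card_gt_0_iff)
qed

lemma Lap_eq_sum_minus_deg: "Lap E u x = (\<Sum>y\<in>nbrs E x. u y) - deg E x * u x"
  by (simp add: Lap_def sum_subtractf deg_def)

lemma legal_step_le_Fs:
  assumes deg: "deg E x > 0" and below: "\<And>y. g y \<le> f y" and f: "f \<in> Fs E s"
    and step: "v - g x \<le> max 0 (s x + Lap E g x - 1) / deg E x"
  shows "v \<le> f x"
proof (cases "s x + Lap E g x \<le> 1")
  case True
  then show ?thesis using step below[of x] by simp
next
  case False
  have f_stable: "s x + Lap E f x \<le> 1" using f by (simp add: Fs_def)
  from False have "(v - g x) * deg E x \<le> s x + Lap E g x - 1"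
    using step deg by (simp add: pos_le_divide_eq)
  then have "deg E x * v \<le> s x + (\<Sum>y\<in>nbrs E x. g y) - 1"
    by (simp add: Lap_eq_sum_minus_deg algebra_simps)
  also have "\<dots> \<le> s x + (\<Sum>y\<in>nbrs E x. f y) - 1"
    using below by (simp add: sum_mono)
  also have "\<dots> \<le> deg E x * f x"
    using f_stable by (simp add: Lap_eq_sum_minus_deg)
  finally show ?thesis using deg by simp
qed

lemma well_ordered_set_induct [consumes 2, case_names step]:
  assumes wo: "well_ordered_set T" and "t \<in> T"
    and step: "\<And>t. t \<in> T \<Longrightarrow> (\<And>r. r \<in> T \<Longrightarrow> r < t \<Longrightarrow> P r) \<Longrightarrow> P t"
  shows "P t"
proof (rule ccontr)
  assume "\<not> P t"
  then obtain m where m: "m \<in> T" "\<not> P m" and least: "\<And>r. r \<in> T \<Longrightarrow> \<not> P r \<Longrightarrow> m \<le> r"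
    using wo \<open>t \<in> T\<close> unfolding well_ordered_set_def
    by (drule_tac x = "{r \<in> T. \<not> P r}" in spec) auto
  have "P m" using step[OF m(1)] least by force
  with m(2) show False ..
qed

lemma tminus_mem_le:
  assumes "closed T" and "r \<in> T" and "r < t"
  shows "tminus T t \<in> T" and "tminus T t \<le> t"
proof -
  let ?S = "{r \<in> T. r < t}"
  have ne: "?S \<noteq> {}" and bdd: "bdd_above ?S"
    using assms(2,3) by (auto intro: bdd_aboveI[of _ t])
  have "closure ?S \<subseteq> T" using \<open>closed T\<close> by (intro closure_minimal) auto
  then show "tminus T t \<in> T"
    using closure_contains_Sup[OF ne bdd] by (auto simp: tminus_def)
  show "tminus T t \<le> t" unfolding tminus_def by (rule cSup_least[OF ne]) auto
qed

lemma incseq_tendsto_Sup: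
  fixes S :: "real set"
  assumes ne: "S \<noteq> {}" and bdd: "bdd_above S"
  obtains tn where "range tn \<subseteq> S" "incseq tn" "tn \<longlonglongrightarrow> Sup S"
proof -
  have "\<exists>r\<in>S. Sup S - inverse (real (Suc n)) < r" for n
    by (rule less_cSupD[OF ne]) simp
  then obtain r where r: "\<And>n. r n \<in> S" "\<And>n. Sup S - inverse (real (Suc n)) < r n"
    by metis
  define tn where "tn n = Max (r ` {..n})" for n
  have "tn n \<in> r ` {..n}" for n unfolding tn_def by (intro Max_in) auto
  then have tnS: "tn n \<in> S" for n using r(1) by (metis imageE)
  have "incseq tn" unfolding incseq_def tn_def by (intro allI impI Max_mono) auto
  moreover have "tn \<longlonglongrightarrow> Sup S"
  proof (rule tendsto_sandwich)
    show "\<forall>\<^sub>F n in sequentially. Sup S - inverse (real (Suc n)) \<le> tn n"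
      using r(2) Max_ge[of "r ` {..n}" "r n" for n] by (intro always_eventually allI)
        (fastforce simp: tn_def intro: order.trans[OF less_imp_le])
    show "\<forall>\<^sub>F n in sequentially. tn n \<le> Sup S"
      using tnS bdd by (intro always_eventually allI cSup_upper)
    show "(\<lambda>n. Sup S - inverse (real (Suc n))) \<longlonglongrightarrow> Sup S"
      using tendsto_diff[OF tendsto_const LIMSEQ_inverse_real_of_nat] by simp
  qed simp
  ultimately show ?thesis using tnS that by blast
qed

subsection \<open>Least action principle\<close>

theorem legal_toppling_le_Fs:
  assumes deg: "\<And>x. deg E x > 0"
    and tp: "toppling_proc T u" and lg: "legal E s T u" and f: "f \<in> Fs E s" and "t \<in> T"
  shows "u t x \<le> f x"
proof -
  have wo: "well_ordered_set T" and "closed T" and "0 \<in> T" and nonneg_T: "T \<subseteq> {0..}"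
    and u0: "\<And>x. u 0 x = 0"
    and cont: "\<And>x t tn. t \<in> T \<Longrightarrow> range tn \<subseteq> T \<Longrightarrow> incseq tn \<Longrightarrow> tn \<longlonglongrightarrow> t
        \<Longrightarrow> (\<lambda>n. u (tn n) x) \<longlonglongrightarrow> u t x"
    using tp unfolding toppling_proc_def by blast+
  have "\<forall>x. u t x \<le> f x" using wo \<open>t \<in> T\<close>
  proof (induction rule: well_ordered_set_induct)
    case (step t)
    show ?case
    proof (cases "t = 0")
      case True
      then show ?thesis using u0 f by (simp add: Fs_def)
    next
      case False
      with \<open>t \<in> T\<close> nonneg_T have "0 < t" by force
      let ?m = "tminus T t"
      have mT: "?m \<in> T" and "?m \<le> t"
        using tminus_mem_le[OF \<open>closed T\<close> \<open>0 \<in> T\<close> \<open>0 < t\<close>] by auto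
      show ?thesis
      proof (cases "?m < t")
        case True
        show ?thesis
        proof
          fix x
          have "u t x - u ?m x \<le> max 0 (s x + Lap E (u ?m) x - 1) / deg E x"
            using lg \<open>t \<in> T\<close> False unfolding legal_def by blast
          then show "u t x \<le> f x"
            using legal_step_le_Fs[OF deg _ f] "step.IH"[OF mT True] by blast
        qed
      next
        case False
        let ?S = "{r \<in> T. r < t}"
        have "Sup ?S = t" using False \<open>?m \<le> t\<close> by (simp add: tminus_def)
        moreover have "?S \<noteq> {}" "bdd_above ?S"
          using \<open>0 \<in> T\<close> \<open>0 < t\<close> by (auto intro: bdd_aboveI[of _ t])
        ultimately obtain tn where tn: "range tn \<subseteq> ?S" "incseq tn" "tn \<longlonglongrightarrow> t"
          using incseq_tendsto_Sup by metis
        show ?thesis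
        proof
          fix x
          have lim: "(\<lambda>n. u (tn n) x) \<longlonglongrightarrow> u t x"
            using tn by (intro cont \<open>t \<in> T\<close>) auto
          have "u (tn n) x \<le> f x" for n
            using tn(1) "step.IH" by blast
          then show "u t x \<le> f x" by (intro LIMSEQ_le_const2[OF lim]) blast
        qed
      qed
    qed
  qed
  then show ?thesis ..
qed

corollary legal_toppling_finite:
  assumes "\<And>x. deg E x > 0" and "toppling_proc T u" "legal E s T u" "Fs E s \<noteq> {}"
  shows "finite_proc T u"
proof -
  obtain f where f: "f \<in> Fs E s" using assms(4) by blast
  show ?thesis
    unfolding finite_proc_def by (metis bdd_aboveI2 legal_toppling_le_Fs[OF assms(1-3) f])
qed

lemma stabilizing_u_lim_in_Fs:
  assumes tp: "toppling_proc T u" and st: "stabilizing E s T u"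
  shows "u_lim T u \<in> Fs E s"
  unfolding Fs_def
proof (intro CollectI conjI allI)
  fix x
  show "s x + Lap E (u_lim T u) x \<le> 1" using st by (simp add: stabilizing_def)
  have "bdd_above ((\<lambda>t. u t x) ` T)" using st by (simp add: stabilizing_def finite_proc_def)
  moreover have "0 \<in> T" "u 0 x = 0" using tp by (auto simp: toppling_proc_def)
  ultimately have "u 0 x \<le> u_lim T u x" unfolding u_lim_def by (intro cSUP_upper)
  with \<open>u 0 x = 0\<close> show "u_lim T u x \<ge> 0" by simp
qed

lemma Fs_nonempty_iff_odometer_finite: "Fs E s \<noteq> {} \<longleftrightarrow> (\<forall>x. odometer E s x < \<infinity>)"
proof
  assume "Fs E s \<noteq> {}"
  then obtain f where "f \<in> Fs E s" by blast
  show "\<forall>x. odometer E s x < \<infinity>"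
  proof
    fix x
    have "odometer E s x \<le> ereal (f x)"
      unfolding odometer_def using \<open>f \<in> Fs E s\<close> by (rule INF_lower)
    also have "\<dots> < \<infinity>" by simp
    finally show "odometer E s x < \<infinity>" .
  qed
next
  assume finite: "\<forall>x. odometer E s x < \<infinity>"
  show "Fs E s \<noteq> {}"
  proof
    assume "Fs E s = {}"
    then have "odometer E s undefined = \<infinity>" by (simp add: odometer_def top_ereal_def)
    with finite show False by simp
  qed
qed

lemma parallel_proc_of_nat: "parallel_proc E s (real n) = par_top E s n"
  by (simp add: parallel_proc_def fun_eq_iff)

lemma incseq_par_top: "incseq (\<lambda>n. par_top E s n x)"
  by (rule incseq_SucI) (simp add: deg_def)

lemma well_ordered_set_Nats: "well_ordered_set \<nat>"
  unfolding well_ordered_set_def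
proof (intro allI impI)
  fix S :: "real set" assume S: "S \<subseteq> \<nat> \<and> S \<noteq> {}"
  then obtain k where "real k \<in> S" by (auto elim!: Nats_cases)
  then have least: "real (LEAST n. real n \<in> S) \<in> S" by (rule LeastI)
  have "real (LEAST n. real n \<in> S) \<le> y" if "y \<in> S" for y
    using S that Least_le[of "\<lambda>n. real n \<in> S"] by (auto elim!: Nats_cases)
  with least show "\<exists>m\<in>S. \<forall>y\<in>S. m \<le> y" by blast
qed

lemma Nats_tendsto_eventually_eq:
  assumes "range tn \<subseteq> \<nat>" and "t \<in> \<nat>" and "tn \<longlonglongrightarrow> (t :: real)"
  shows "\<forall>\<^sub>F n in sequentially. tn n = t"
proof -
  have "\<forall>\<^sub>F n in sequentially. dist (tn n) t < 1" using assms(3) by (rule tendstoD) simp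
  then show ?thesis
  proof (rule eventually_mono)
    fix n assume "dist (tn n) t < 1"
    then show "tn n = t" using assms(1,2) Nats_subset_Ints Ints_eq_abs_less1[of "tn n" t]
      by (auto simp: dist_real_def)
  qed
qed

lemma toppling_proc_parallel: "toppling_proc \<nat> (parallel_proc E s)"
  unfolding toppling_proc_def
proof (intro conjI allI ballI impI well_ordered_set_Nats)
  show "\<nat> \<subseteq> {0::real..}" by (auto elim!: Nats_cases)
  fix x
  show "parallel_proc E s 0 x = 0" by (simp add: parallel_proc_def)
  show "parallel_proc E s t x \<le> parallel_proc E s t' x" if "t \<in> \<nat>" "t' \<in> \<nat>" "t \<le> t'" for t t'
    using that incseq_par_top[of E s x]
    by (auto elim!: Nats_cases simp: parallel_proc_of_nat incseq_def)
  then show "parallel_proc E s t x \<ge> 0" if "t \<in> \<nat>" for t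
    using that by (metis Nats_0 \<open>parallel_proc E s 0 x = 0\<close> Nats_cases of_nat_0_le_iff)
  show "(\<lambda>n. parallel_proc E s (tn n) x) \<longlonglongrightarrow> parallel_proc E s t x"
    if "t \<in> \<nat>" "range tn \<subseteq> \<nat>" "tn \<longlonglongrightarrow> t" for t tn
    using Nats_tendsto_eventually_eq[OF that(2,1,3)]
    by (intro tendsto_eventually) (auto elim: eventually_mono)
qed simp_all

lemma legal_parallel: "legal E s \<nat> (parallel_proc E s)"
  unfolding legal_def
proof (intro allI ballI)
  fix t :: real and x assume t: "t \<in> \<nat> - {0}"
  then obtain k where "t = real k" by (auto elim!: Nats_cases)
  with t obtain m where t_Suc: "t = real (Suc m)" by (cases k) auto
  have "tminus \<nat> t = real m" unfolding tminus_def
  proof (rule cSup_eq_maximum)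
    show "real m \<in> {r \<in> \<nat>. r < t}" using t_Suc by simp
    show "r \<le> real m" if "r \<in> {r \<in> \<nat>. r < t}" for r
      using that t_Suc by (auto elim!: Nats_cases)
  qed
  then show "parallel_proc E s t x - parallel_proc E s (tminus \<nat> t) x
         \<le> max 0 (s x + Lap E (parallel_proc E s (tminus \<nat> t)) x - 1) / deg E x"
    by (simp add: t_Suc parallel_proc_of_nat del: of_nat_Suc)
qed

text \<open>The increments of a convergent sequence tend to \<open>0\<close>, and they are the legal amounts
  \<open>(s + \<Delta>u\<^sub>n - 1)\<^sup>+ / deg\<close>, which converge to the same expression at the limit.\<close>

lemma stabilizing_parallel:
  assumes deg: "\<And>x. deg E x > 0" and fin: "finite_proc \<nat> (parallel_proc E s)"
  shows "stabilizing E s \<nat> (parallel_proc E s)"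
  unfolding stabilizing_def
proof (intro conjI allI fin)
  fix x
  let ?L = "u_lim \<nat> (parallel_proc E s)"
  have image: "(\<lambda>t. parallel_proc E s t y) ` \<nat> = range (\<lambda>n. par_top E s n y)" for y
    by (auto simp: Nats_def image_image parallel_proc_of_nat)
  have conv: "(\<lambda>n. par_top E s n y) \<longlonglongrightarrow> ?L y" for y
  proof -
    have "bdd_above (range (\<lambda>n. par_top E s n y))"
      using fin by (simp add: finite_proc_def image)
    then show ?thesis using LIMSEQ_incseq_SUP[OF _ incseq_par_top] by (simp add: u_lim_def image)
  qed
  let ?inc = "\<lambda>n. max 0 (s x + Lap E (par_top E s n) x - 1) / deg E x"
  have "(\<lambda>n. par_top E s (Suc n) x - par_top E s n x) \<longlonglongrightarrow> ?L x - ?L x"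
    by (intro tendsto_intros conv[THEN LIMSEQ_Suc] conv)
  then have "?inc \<longlonglongrightarrow> 0" by simp
  moreover have "?inc \<longlonglongrightarrow> max 0 (s x + Lap E ?L x - 1) / deg E x"
    unfolding Lap_def using deg[of x] by (intro tendsto_intros conv) simp
  ultimately have "max 0 (s x + Lap E ?L x - 1) / deg E x = 0" using LIMSEQ_unique by blast
  then show "s x + Lap E ?L x \<le> 1" using deg[of x] by simp
qed

theorem corollary2p11:
  fixes E :: "'a \<Rightarrow> 'a \<Rightarrow> bool" and s :: "'a \<Rightarrow> real"
  assumes sym: "symp E"
    and irrefl: "\<And>x. \<not> E x x"
    and locfin: "\<And>x. finite (nbrs E x)"
    and conn: "\<And>x y. E\<^sup>*\<^sup>* x y"
    and edge: "\<exists>x y. E x y"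
  shows "((\<exists>T u. toppling_proc T u \<and> legal E s T u \<and> stabilizing E s T u)
           \<longleftrightarrow> (\<exists>T u. toppling_proc T u \<and> stabilizing E s T u))
       \<and> ((\<exists>T u. toppling_proc T u \<and> stabilizing E s T u) \<longleftrightarrow> Fs E s \<noteq> {})
       \<and> (Fs E s \<noteq> {} \<longleftrightarrow> (\<forall>x. odometer E s x < \<infinity>))
       \<and> ((\<forall>x. odometer E s x < \<infinity>)
           \<longleftrightarrow> (\<forall>T u. toppling_proc T u \<and> legal E s T u \<longrightarrow> finite_proc T u))
       \<and> ((\<forall>T u. toppling_proc T u \<and> legal E s T u \<longrightarrow> finite_proc T u)
           \<longleftrightarrow> finite_proc \<nat> (parallel_proc E s))"
proof -
  have deg: "\<And>x. deg E x > 0" using deg_pos[OF locfin conn edge] .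
  have stabilizing_Fs: "Fs E s \<noteq> {}" if "toppling_proc T u" "stabilizing E s T u" for T u
    using stabilizing_u_lim_in_Fs[OF that] by blast
  have Fs_legal_finite: "toppling_proc T u \<and> legal E s T u \<longrightarrow> finite_proc T u"
    if "Fs E s \<noteq> {}" for T u
    using legal_toppling_finite[OF deg _ _ that] by blast
  have legal_finite_parallel: "finite_proc \<nat> (parallel_proc E s)"
    if "\<forall>T u. toppling_proc T u \<and> legal E s T u \<longrightarrow> finite_proc T u"
    using that toppling_proc_parallel legal_parallel by blast
  have parallel_witness: "toppling_proc \<nat> (parallel_proc E s) \<and> legal E s \<nat> (parallel_proc E s)
      \<and> stabilizing E s \<nat> (parallel_proc E s)" if "finite_proc \<nat> (parallel_proc E s)"
    using toppling_proc_parallel legal_parallel stabilizing_parallel[OF deg that] by blast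
  show ?thesis
    using Fs_nonempty_iff_odometer_finite[of E s] stabilizing_Fs Fs_legal_finite
      legal_finite_parallel parallel_witness by blast
qed

end
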